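(* Let $\mathbf G=(G,\tau)$ be a real linear algebraic group, write ${}^\gamma g=\tau(g)$, and let $\mathbf Y$ be a right homogeneous space of $\mathbf G$ with complex points $Y$ carrying a compatible complex conjugation $y\mapsto {}^\gamma y$ (i.e. ${}^\gamma(y\cdot g)={}^\gamma y\cdot{}^\gamma g$). Fix $y_0\in Y$, let $H=\mathrm{Stab}_G(y_0)$, and let $g_{y_0}\in G$ satisfy ${}^\gamma y_0=y_0\cdot g_{y_0}$. Let $z\in Hg_{y_0}$ satisfy $z\cdot{}^\gamma z=1$. Then $\varphi_z\colon g\mapsto z\,{}^\gamma g\,z^{-1}$ is an anti-regular involution of $G$ with $\varphi_z(H)=H$; put ${}_z\mathbf G=(G,\varphi_z)$ and ${}_z\mathbf H=(H,\varphi_z|_H)$. Consider the composite map $$H^1({}_z\mathbf H)\to H^1({}_z\mathbf G)\to H^1\mathbf G,\qquad [h]\mapsto[h]\mapsto[hz].$$ Then there exists $z'\in Hg_{y_0}\cap B^1\mathbf G$ if and only if the image of this composite map contains the neutral class $[1]\in H^1\mathbf G$.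
   Context: For a real group $(G,\tau)$: $Z^1=\{z\in G: z\tau(z)=1\}$, $B^1=\{g^{-1}\tau(g): g\in G\}$, $z\sim b^{-1}z\tau(b)$, $H^1=Z^1/\sim$ with neutral class $[1]$. Anti-regular maps: $\varphi$ such that $x\mapsto\overline{f(\varphi(x))}$ is regular for each regular function $f$. *)

theory Defs
  imports "HOL-Analysis.Analysis"
begin

text \<open>Complex linear algebraic groups are modelled as Zariski-closed subgroups of
  GL_n(C), realised as sets of matrices of type complex^'n^'n.\<close>

inductive_set poly_fun :: "(complex^'n^'n \<Rightarrow> complex) set" where
  pf_const: "(\<lambda>_. c) \<in> poly_fun"
| pf_coord: "(\<lambda>x. x $ i $ j) \<in> poly_fun"
| pf_add: "p \<in> poly_fun \<Longrightarrow> q \<in> poly_fun \<Longrightarrow> (\<lambda>x. p x + q x) \<in> poly_fun"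
| pf_mult: "p \<in> poly_fun \<Longrightarrow> q \<in> poly_fun \<Longrightarrow> (\<lambda>x. p x * q x) \<in> poly_fun"

definition matrix_subgroup :: "(complex^'n^'n) set \<Rightarrow> bool" where
  "matrix_subgroup G \<longleftrightarrow> mat 1 \<in> G \<and> (\<forall>x\<in>G. invertible x) \<and>
     (\<forall>x\<in>G. \<forall>y\<in>G. x ** y \<in> G) \<and> (\<forall>x\<in>G. matrix_inv x \<in> G)"

definition linear_algebraic_group :: "(complex^'n^'n) set \<Rightarrow> bool" where
  "linear_algebraic_group G \<longleftrightarrow> matrix_subgroup G \<and>
     (\<exists>S \<subseteq> poly_fun. G = {x. invertible x \<and> (\<forall>p\<in>S. p x = 0)})"

definition regular_on :: "(complex^'n^'n) set \<Rightarrow> (complex^'n^'n \<Rightarrow> complex) \<Rightarrow> bool" where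
  "regular_on G f \<longleftrightarrow> (\<exists>p\<in>poly_fun. \<exists>k::nat. \<forall>x\<in>G. f x = p x / det x ^ k)"

definition anti_regular :: "(complex^'n^'n) set \<Rightarrow> (complex^'n^'n \<Rightarrow> complex^'n^'n) \<Rightarrow> bool" where
  "anti_regular G \<phi> \<longleftrightarrow> \<phi> ` G \<subseteq> G \<and>
     (\<forall>f. regular_on G f \<longrightarrow> regular_on G (\<lambda>x. cnj (f (\<phi> x))))"

definition anti_regular_involution :: "(complex^'n^'n) set \<Rightarrow> (complex^'n^'n \<Rightarrow> complex^'n^'n) \<Rightarrow> bool" where
  "anti_regular_involution G \<phi> \<longleftrightarrow> anti_regular G \<phi> \<and>
     (\<forall>x\<in>G. \<forall>y\<in>G. \<phi> (x ** y) = \<phi> x ** \<phi> y) \<and> (\<forall>x\<in>G. \<phi> (\<phi> x) = x)"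

definition real_group :: "(complex^'n^'n) set \<Rightarrow> (complex^'n^'n \<Rightarrow> complex^'n^'n) \<Rightarrow> bool" where
  "real_group G \<tau> \<longleftrightarrow> linear_algebraic_group G \<and> anti_regular_involution G \<tau>"

definition Z1 :: "(complex^'n^'n) set \<Rightarrow> (complex^'n^'n \<Rightarrow> complex^'n^'n) \<Rightarrow> (complex^'n^'n) set" where
  "Z1 G \<tau> = {z \<in> G. z ** \<tau> z = mat 1}"

definition B1 :: "(complex^'n^'n) set \<Rightarrow> (complex^'n^'n \<Rightarrow> complex^'n^'n) \<Rightarrow> (complex^'n^'n) set" where
  "B1 G \<tau> = {matrix_inv g ** \<tau> g | g. g \<in> G}"

definition coh_rel :: "(complex^'n^'n) set \<Rightarrow> (complex^'n^'n \<Rightarrow> complex^'n^'n) \<Rightarrow> ((complex^'n^'n) \<times> (complex^'n^'n)) set" where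
  "coh_rel G \<tau> = {(z, w). z \<in> Z1 G \<tau> \<and> w \<in> Z1 G \<tau> \<and> (\<exists>b\<in>G. w = matrix_inv b ** z ** \<tau> b)}"

definition H1 :: "(complex^'n^'n) set \<Rightarrow> (complex^'n^'n \<Rightarrow> complex^'n^'n) \<Rightarrow> (complex^'n^'n) set set" where
  "H1 G \<tau> = Z1 G \<tau> // coh_rel G \<tau>"

definition cls :: "(complex^'n^'n) set \<Rightarrow> (complex^'n^'n \<Rightarrow> complex^'n^'n) \<Rightarrow> complex^'n^'n \<Rightarrow> (complex^'n^'n) set" where
  "cls G \<tau> z = coh_rel G \<tau> `` {z}"

definition twist :: "(complex^'n^'n \<Rightarrow> complex^'n^'n) \<Rightarrow> complex^'n^'n \<Rightarrow> complex^'n^'n \<Rightarrow> complex^'n^'n" where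
  "twist \<tau> z g = z ** \<tau> g ** matrix_inv z"

definition right_homogeneous_space ::
  "(complex^'n^'n) set \<Rightarrow> 'y set \<Rightarrow> ('y \<Rightarrow> complex^'n^'n \<Rightarrow> 'y) \<Rightarrow> bool" where
  "right_homogeneous_space G Y act \<longleftrightarrow>
     (\<forall>y\<in>Y. \<forall>g\<in>G. act y g \<in> Y) \<and> (\<forall>y\<in>Y. act y (mat 1) = y) \<and>
     (\<forall>y\<in>Y. \<forall>g\<in>G. \<forall>h\<in>G. act (act y g) h = act y (g ** h)) \<and>
     Y \<noteq> {} \<and> (\<forall>y\<in>Y. \<forall>y'\<in>Y. \<exists>g\<in>G. act y g = y')"

definition compatible_conj ::
  "(complex^'n^'n) set \<Rightarrow> (complex^'n^'n \<Rightarrow> complex^'n^'n) \<Rightarrow> 'y set \<Rightarrow> ('y \<Rightarrow> complex^'n^'n \<Rightarrow> 'y) \<Rightarrow> ('y \<Rightarrow> 'y) \<Rightarrow> bool" where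
  "compatible_conj G \<tau> Y act c \<longleftrightarrow> c ` Y \<subseteq> Y \<and> (\<forall>y\<in>Y. c (c y) = y) \<and>
     (\<forall>y\<in>Y. \<forall>g\<in>G. c (act y g) = act (c y) (\<tau> g))"

definition stabilizer :: "(complex^'n^'n) set \<Rightarrow> ('y \<Rightarrow> complex^'n^'n \<Rightarrow> 'y) \<Rightarrow> 'y \<Rightarrow> (complex^'n^'n) set" where
  "stabilizer G act y0 = {g \<in> G. act y0 g = y0}"

end

theory Submission
  imports Defs
begin

text \<open>As \<open>z \<in> H g\<^sub>y\<^sub>0\<close>, the coset \<open>H g\<^sub>y\<^sub>0\<close> is the fibre \<open>{g \<in> G. y\<^sub>0 g = \<^sup>\<gamma>y\<^sub>0}\<close>, which is
  also \<open>H z\<close>; and \<open>\<phi>\<^sub>z\<close> preserves \<open>H = Stab(y\<^sub>0)\<close> because \<open>z\<close> carries \<open>y\<^sub>0\<close> to \<open>\<^sup>\<gamma>y\<^sub>0\<close>.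
  Right multiplication by \<open>z\<close> turns \<open>\<phi>\<^sub>z\<close>-cocycles into \<open>\<tau>\<close>-cocycles and intertwines the
  two coboundary relations, \<open>(b\<^sup>-\<^sup>1 h \<phi>\<^sub>z(b)) z = b\<^sup>-\<^sup>1 (h z) \<tau>(b)\<close>. Since \<open>B\<^sup>1\<close> is the
  neutral class, an element \<open>h z\<close> of the coset is a coboundary exactly when \<open>h\<close> is a
  \<open>\<phi>\<^sub>z\<close>-cocycle of \<open>H\<close> whose class maps to \<open>[1]\<close>.\<close>

lemma matrix_inv_right:
  fixes A :: "'a::field^'n^'n"
  assumes "invertible A"
  shows "A ** matrix_inv A = mat 1"
  using someI_ex[OF assms[unfolded invertible_def]] unfolding matrix_inv_def by auto

lemma matrix_inv_left:
  fixes A :: "'a::field^'n^'n"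
  assumes "invertible A"
  shows "matrix_inv A ** A = mat 1"
  using someI_ex[OF assms[unfolded invertible_def]] unfolding matrix_inv_def by auto

lemma matrix_inv_unique:
  fixes A B :: "'a::field^'n^'n"
  assumes "A ** B = mat 1"
  shows "matrix_inv A = B"
proof -
  have "invertible A" using assms invertible_right_inverse by blast
  have "matrix_inv A = matrix_inv A ** (A ** B)" using assms by simp
  also have "\<dots> = B" by (simp add: matrix_mul_assoc matrix_inv_left[OF \<open>invertible A\<close>])
  finally show ?thesis .
qed

lemma matrix_mul_inv_cancel_right:
  fixes A x :: "'a::field^'n^'n"
  assumes "invertible x"
  shows "A ** x ** matrix_inv x = A" "A ** matrix_inv x ** x = A"
  by (simp_all add: matrix_mul_assoc[symmetric] matrix_inv_left[OF assms] matrix_inv_right[OF assms])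

lemma poly_fun_sum:
  assumes "finite S" "\<And>i. i \<in> S \<Longrightarrow> f i \<in> poly_fun"
  shows "(\<lambda>x. \<Sum>i\<in>S. f i x) \<in> poly_fun"
  using assms
proof (induction S rule: finite_induct)
  case empty
  then show ?case using pf_const[of 0] by simp
next
  case (insert a S)
  then show ?case using pf_add[of "f a" "\<lambda>x. \<Sum>i\<in>S. f i x"] by simp
qed

lemma poly_fun_matrix_mult_left_entry:
  "(\<lambda>x::complex^'n^'n. (A ** x) $ i $ k) \<in> poly_fun"
proof -
  have "(\<lambda>x::complex^'n^'n. \<Sum>l\<in>UNIV. A$i$l * x$l$k) \<in> poly_fun"
    by (rule poly_fun_sum) (auto intro: pf_mult pf_const pf_coord)
  then show ?thesis by (simp add: matrix_matrix_mult_def)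
qed

lemma poly_fun_comp_matrix_mult:
  fixes A B :: "complex^'n^'n"
  assumes "p \<in> poly_fun"
  shows "(\<lambda>x. p (A ** x ** B)) \<in> poly_fun"
  using assms
proof (induction p rule: poly_fun.induct)
  case (pf_const c)
  then show ?case by (rule poly_fun.pf_const)
next
  case (pf_coord i j)
  have "(\<lambda>x::complex^'n^'n. \<Sum>k\<in>UNIV. (A ** x)$i$k * B$k$j) \<in> poly_fun"
    by (rule poly_fun_sum) (auto intro: pf_mult pf_const poly_fun_matrix_mult_left_entry)
  then show ?case by (simp add: matrix_matrix_mult_def[of "A ** _" B])
next
  case (pf_add p q)
  show ?case using poly_fun.pf_add[OF pf_add.IH] by simp
next
  case (pf_mult p q)
  show ?case using poly_fun.pf_mult[OF pf_mult.IH] by simp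
qed

lemma matrix_subgroupD:
  assumes "matrix_subgroup G"
  shows "mat 1 \<in> G" "x \<in> G \<Longrightarrow> invertible x" "x \<in> G \<Longrightarrow> y \<in> G \<Longrightarrow> x ** y \<in> G"
    "x \<in> G \<Longrightarrow> matrix_inv x \<in> G"
  using assms unfolding matrix_subgroup_def by auto

lemma regular_on_conj:
  fixes G :: "(complex^'n^'n) set"
  assumes G: "matrix_subgroup G" and "z \<in> G" and "regular_on G f"
  shows "regular_on G (\<lambda>x. f (z ** x ** matrix_inv z))"
proof -
  obtain p k where p: "p \<in> poly_fun" "\<forall>x\<in>G. f x = p x / det x ^ k"
    using assms(3) unfolding regular_on_def by blast
  have "det z * det (matrix_inv z) = 1"
    using det_mul[of z "matrix_inv z"] matrix_inv_right[OF matrix_subgroupD(2)[OF G \<open>z \<in> G\<close>]]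
    by simp
  then have det_conj: "det (z ** x ** matrix_inv z) = det x" for x :: "complex^'n^'n"
    by (simp add: det_mul)
  have conj_eq: "f (z ** x ** matrix_inv z) = p (z ** x ** matrix_inv z) / det x ^ k"
    if "x \<in> G" for x
  proof -
    have "z ** x ** matrix_inv z \<in> G"
      using that \<open>z \<in> G\<close> matrix_subgroupD(3,4)[OF G] by blast
    then show ?thesis using p(2) det_conj by metis
  qed
  show ?thesis
    unfolding regular_on_def
    by (intro bexI[OF _ poly_fun_comp_matrix_mult[OF p(1), of z "matrix_inv z"]] exI[of _ k] ballI conj_eq)
qed

lemma twist_mult_right:
  fixes z :: "complex^'n^'n"
  assumes "invertible z"
  shows "(matrix_inv b ** h ** twist \<sigma> z b) ** z = matrix_inv b ** (h ** z) ** \<sigma> b"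
  by (simp add: twist_def matrix_mul_assoc matrix_mul_inv_cancel_right[OF assms])

lemma Z1_mono: "H \<subseteq> G \<Longrightarrow> Z1 H \<sigma> \<subseteq> Z1 G \<sigma>"
  unfolding Z1_def by blast

lemma coh_rel_mono: "H \<subseteq> G \<Longrightarrow> coh_rel H \<sigma> \<subseteq> coh_rel G \<sigma>"
  unfolding coh_rel_def using Z1_mono by blast

locale matrix_group_involution =
  fixes G :: "(complex^'n^'n) set" and \<sigma> :: "complex^'n^'n \<Rightarrow> complex^'n^'n"
  assumes subgroup: "matrix_subgroup G"
    and map_closed: "x \<in> G \<Longrightarrow> \<sigma> x \<in> G"
    and map_mult: "x \<in> G \<Longrightarrow> y \<in> G \<Longrightarrow> \<sigma> (x ** y) = \<sigma> x ** \<sigma> y"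
    and involutive: "x \<in> G \<Longrightarrow> \<sigma> (\<sigma> x) = x"
begin

lemmas one_mem = matrix_subgroupD(1)[OF subgroup]
  and invertible_mem = matrix_subgroupD(2)[OF subgroup]
  and mult_mem = matrix_subgroupD(3)[OF subgroup]
  and inv_mem = matrix_subgroupD(4)[OF subgroup]

lemma map_one: "\<sigma> (mat 1) = mat 1"
proof -
  have inv: "invertible (\<sigma> (mat 1))" using invertible_mem map_closed one_mem by blast
  have idem: "\<sigma> (mat 1) ** \<sigma> (mat 1) = \<sigma> (mat 1)"
    using map_mult[OF one_mem one_mem] by simp
  have "\<sigma> (mat 1) = matrix_inv (\<sigma> (mat 1)) ** (\<sigma> (mat 1) ** \<sigma> (mat 1))"
    by (simp add: matrix_mul_assoc matrix_inv_left[OF inv])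
  also have "\<dots> = mat 1" using idem matrix_inv_left[OF inv] by simp
  finally show ?thesis .
qed

lemma map_inv: "x \<in> G \<Longrightarrow> \<sigma> (matrix_inv x) = matrix_inv (\<sigma> x)"
  by (rule matrix_inv_unique[symmetric])
    (simp add: map_mult[symmetric] inv_mem matrix_inv_right invertible_mem map_one)

lemma coh_rel_equiv: "equiv (Z1 G \<sigma>) (coh_rel G \<sigma>)"
proof (rule equivI)
  have inv_one: "matrix_inv (mat 1 :: complex^'n^'n) = mat 1" by (rule matrix_inv_unique) simp
  show "refl_on (Z1 G \<sigma>) (coh_rel G \<sigma>)"
    unfolding refl_on_def coh_rel_def using one_mem map_one inv_one by force
  show "sym (coh_rel G \<sigma>)"
  proof (rule symI)
    fix a b assume "(a, b) \<in> coh_rel G \<sigma>"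
    then obtain c where c: "c \<in> G" "a \<in> Z1 G \<sigma>" "b \<in> Z1 G \<sigma>" "b = matrix_inv c ** a ** \<sigma> c"
      unfolding coh_rel_def by auto
    have "invertible c" "invertible (\<sigma> c)" using c(1) invertible_mem map_closed by auto
    have "matrix_inv (matrix_inv c) = c"
      by (rule matrix_inv_unique) (rule matrix_inv_left[OF \<open>invertible c\<close>])
    then have "a = matrix_inv (matrix_inv c) ** b ** \<sigma> (matrix_inv c)"
      using c(4) map_inv[OF c(1)]
      by (simp add: matrix_mul_assoc matrix_inv_right[OF \<open>invertible c\<close>]
          matrix_mul_inv_cancel_right[OF \<open>invertible (\<sigma> c)\<close>])
    then show "(b, a) \<in> coh_rel G \<sigma>" unfolding coh_rel_def using c inv_mem by blast
  qed
  show "trans (coh_rel G \<sigma>)"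
  proof (rule transI)
    fix a b d assume "(a, b) \<in> coh_rel G \<sigma>" "(b, d) \<in> coh_rel G \<sigma>"
    then obtain c e where c: "c \<in> G" "e \<in> G" "a \<in> Z1 G \<sigma>" "d \<in> Z1 G \<sigma>"
      "b = matrix_inv c ** a ** \<sigma> c" "d = matrix_inv e ** b ** \<sigma> e"
      unfolding coh_rel_def by auto
    have "invertible c" "invertible e" using c invertible_mem by auto
    then have "matrix_inv (c ** e) = matrix_inv e ** matrix_inv c"
      by (intro matrix_inv_unique)
        (simp add: matrix_mul_assoc matrix_mul_inv_cancel_right matrix_inv_right)
    then have "d = matrix_inv (c ** e) ** a ** \<sigma> (c ** e)"
      using c map_mult by (simp add: matrix_mul_assoc)
    then show "(a, d) \<in> coh_rel G \<sigma>" unfolding coh_rel_def using c mult_mem by blast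
  qed
  show "coh_rel G \<sigma> \<subseteq> Z1 G \<sigma> \<times> Z1 G \<sigma>" unfolding coh_rel_def by auto
qed

lemma cls_eq: "(a, b) \<in> coh_rel G \<sigma> \<Longrightarrow> cls G \<sigma> a = cls G \<sigma> b"
  unfolding cls_def by (rule equiv_class_eq[OF coh_rel_equiv])

lemma cls_eq_iff:
  "a \<in> Z1 G \<sigma> \<Longrightarrow> b \<in> Z1 G \<sigma> \<Longrightarrow> cls G \<sigma> a = cls G \<sigma> b \<longleftrightarrow> (a, b) \<in> coh_rel G \<sigma>"
  unfolding cls_def using equiv_class_eq_iff[OF coh_rel_equiv] by blast

lemma coboundary_mem_Z1:
  assumes "g \<in> G"
  shows "matrix_inv g ** \<sigma> g \<in> Z1 G \<sigma>"
proof -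
  have "invertible g" "invertible (\<sigma> g)" using assms invertible_mem map_closed by auto
  have "\<sigma> (matrix_inv g ** \<sigma> g) = matrix_inv (\<sigma> g) ** g"
    using assms by (simp add: map_mult inv_mem map_closed map_inv involutive)
  then have "matrix_inv g ** \<sigma> g ** \<sigma> (matrix_inv g ** \<sigma> g) = mat 1"
    by (simp add: matrix_mul_assoc matrix_mul_inv_cancel_right[OF \<open>invertible (\<sigma> g)\<close>]
        matrix_inv_left[OF \<open>invertible g\<close>])
  then show ?thesis unfolding Z1_def using assms inv_mem map_closed mult_mem by blast
qed

lemma B1_eq_cls_one: "B1 G \<sigma> = cls G \<sigma> (mat 1)"
proof -
  have "mat 1 \<in> Z1 G \<sigma>" unfolding Z1_def using one_mem map_one by simp
  then show ?thesis
    unfolding B1_def cls_def coh_rel_def using coboundary_mem_Z1 by auto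
qed

lemma involution_image_eq:
  assumes "K \<subseteq> G" "\<sigma> ` K \<subseteq> K"
  shows "\<sigma> ` K = K"
proof
  show "K \<subseteq> \<sigma> ` K"
  proof
    fix x assume "x \<in> K"
    then have "x = \<sigma> (\<sigma> x)" "\<sigma> x \<in> K" using assms involutive by auto
    then show "x \<in> \<sigma> ` K" by blast
  qed
qed (rule assms(2))

context
  fixes z assumes z: "z \<in> G" and z_cocycle: "z ** \<sigma> z = mat 1"
begin

lemma map_cocycle: "\<sigma> z = matrix_inv z"
  using matrix_inv_unique[OF z_cocycle] by simp

lemma invertible_cocycle: "invertible z"
  by (rule invertible_mem[OF z])

lemma twist_group_involution: "matrix_group_involution G (twist \<sigma> z)"
proof
  show "twist \<sigma> z x \<in> G" if "x \<in> G" for x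
    unfolding twist_def by (intro mult_mem z inv_mem map_closed that)
  show "twist \<sigma> z (x ** y) = twist \<sigma> z x ** twist \<sigma> z y" if "x \<in> G" "y \<in> G" for x y
    using that by (simp add: twist_def map_mult matrix_mul_assoc
        matrix_mul_inv_cancel_right[OF invertible_cocycle])
  show "twist \<sigma> z (twist \<sigma> z x) = x" if "x \<in> G" for x
  proof -
    have "\<sigma> (matrix_inv z) = z"
      using map_inv[OF z] map_cocycle matrix_inv_unique[OF matrix_inv_left[OF invertible_cocycle]]
      by simp
    moreover have "\<sigma> (twist \<sigma> z x) = \<sigma> z ** x ** \<sigma> (matrix_inv z)"
      unfolding twist_def using that z
      by (simp add: map_mult map_closed inv_mem mult_mem involutive)
    ultimately show ?thesis
      by (simp add: twist_def map_cocycle matrix_mul_assoc matrix_inv_right[OF invertible_cocycle]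
          matrix_mul_inv_cancel_right[OF invertible_cocycle])
  qed
qed (rule subgroup)

lemma Z1_twist_iff:
  assumes "h \<in> G"
  shows "h \<in> Z1 G (twist \<sigma> z) \<longleftrightarrow> h ** z \<in> Z1 G \<sigma>"
proof -
  have "h ** z ** \<sigma> (h ** z) = h ** twist \<sigma> z h"
    using assms z by (simp add: twist_def map_mult map_cocycle matrix_mul_assoc)
  moreover have "h ** z \<in> G" by (intro mult_mem assms z)
  ultimately show ?thesis unfolding Z1_def using assms by simp
qed

lemma coh_rel_twist_mult_right:
  assumes "(h, h') \<in> coh_rel G (twist \<sigma> z)"
  shows "(h ** z, h' ** z) \<in> coh_rel G \<sigma>"
proof -
  obtain b where b: "b \<in> G" "h \<in> Z1 G (twist \<sigma> z)" "h' \<in> Z1 G (twist \<sigma> z)"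
    and h': "h' = matrix_inv b ** h ** twist \<sigma> z b"
    using assms unfolding coh_rel_def by auto
  then have "h ** z \<in> Z1 G \<sigma>" "h' ** z \<in> Z1 G \<sigma>"
    using Z1_twist_iff Z1_def by auto
  then show ?thesis
    unfolding coh_rel_def using b h' twist_mult_right[OF invertible_cocycle] by auto
qed

lemma Z1_twist_subset_mult_right:
  assumes "H \<subseteq> G" "h \<in> Z1 H (twist \<sigma> z)"
  shows "h \<in> Z1 G (twist \<sigma> z) \<and> h ** z \<in> Z1 G \<sigma>"
proof -
  have "h \<in> Z1 G (twist \<sigma> z)" using assms Z1_mono by blast
  moreover have "h \<in> G" using calculation unfolding Z1_def by simp
  ultimately show ?thesis using Z1_twist_iff by blast
qed

lemma cls_twist_subset_mult_right:
  assumes "H \<subseteq> G" "h' \<in> cls H (twist \<sigma> z) h"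
  shows "cls G (twist \<sigma> z) h' = cls G (twist \<sigma> z) h \<and> cls G \<sigma> (h' ** z) = cls G \<sigma> (h ** z)"
proof -
  interpret \<phi>: matrix_group_involution G "twist \<sigma> z" by (rule twist_group_involution)
  have "(h, h') \<in> coh_rel G (twist \<sigma> z)"
    using assms coh_rel_mono unfolding cls_def by blast
  then show ?thesis using \<phi>.cls_eq cls_eq coh_rel_twist_mult_right by metis
qed

lemma right_coset_meets_B1_iff:
  assumes "H \<subseteq> G"
  shows "(\<exists>h\<in>H. h ** z \<in> B1 G \<sigma>) \<longleftrightarrow>
    cls G \<sigma> (mat 1) \<in> (\<lambda>h. cls G \<sigma> (h ** z)) ` Z1 H (twist \<sigma> z)"
proof -
  have one: "mat 1 \<in> Z1 G \<sigma>" unfolding Z1_def using one_mem map_one by simp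
  have "h ** z \<in> B1 G \<sigma> \<longleftrightarrow> h \<in> Z1 H (twist \<sigma> z) \<and> cls G \<sigma> (mat 1) = cls G \<sigma> (h ** z)"
    if "h \<in> H" for h
  proof -
    have "h \<in> G" using that assms by auto
    have "h \<in> Z1 H (twist \<sigma> z) \<longleftrightarrow> h \<in> Z1 G (twist \<sigma> z)"
      using that assms unfolding Z1_def by auto
    also have "\<dots> \<longleftrightarrow> h ** z \<in> Z1 G \<sigma>" by (rule Z1_twist_iff[OF \<open>h \<in> G\<close>])
    moreover have "h ** z \<in> B1 G \<sigma> \<longleftrightarrow> (mat 1, h ** z) \<in> coh_rel G \<sigma>"
      unfolding B1_eq_cls_one cls_def by simp
    ultimately show ?thesis
      using cls_eq_iff[OF one] unfolding coh_rel_def by auto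
  qed
  moreover have "Z1 H (twist \<sigma> z) \<subseteq> H" unfolding Z1_def by auto
  ultimately show ?thesis by auto
qed

end

end

lemma anti_regular_twist:
  fixes G :: "(complex^'n^'n) set"
  assumes G: "matrix_subgroup G" and "anti_regular G \<sigma>" "z \<in> G"
  shows "anti_regular G (twist \<sigma> z)"
  unfolding anti_regular_def
proof (intro conjI allI impI)
  show "twist \<sigma> z ` G \<subseteq> G"
    using assms unfolding anti_regular_def twist_def by (auto intro: matrix_subgroupD[OF G])
  fix f assume "regular_on G f"
  then have "regular_on G (\<lambda>x. f (z ** x ** matrix_inv z))"
    by (rule regular_on_conj[OF G \<open>z \<in> G\<close>])
  then show "regular_on G (\<lambda>x. cnj (f (twist \<sigma> z x)))"
    using assms(2) unfolding anti_regular_def twist_def by blast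
qed

lemma anti_regular_involution_iff:
  "matrix_subgroup G \<Longrightarrow>
    anti_regular_involution G \<sigma> \<longleftrightarrow> anti_regular G \<sigma> \<and> matrix_group_involution G \<sigma>"
  unfolding anti_regular_involution_def anti_regular_def matrix_group_involution_def by blast

lemma anti_regular_involution_twist:
  assumes "matrix_subgroup G" "anti_regular_involution G \<sigma>" "z \<in> G" "z ** \<sigma> z = mat 1"
  shows "anti_regular_involution G (twist \<sigma> z)"
  using assms anti_regular_twist anti_regular_involution_iff
    matrix_group_involution.twist_group_involution by metis

lemma right_homogeneous_spaceD:
  assumes "right_homogeneous_space G Y act" "y \<in> Y"
  shows "act y (mat 1) = y" "g \<in> G \<Longrightarrow> h \<in> G \<Longrightarrow> act (act y g) h = act y (g ** h)"
  using assms unfolding right_homogeneous_space_def by auto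

lemma stabilizer_right_coset:
  fixes G :: "(complex^'n^'n) set"
  assumes G: "matrix_subgroup G" and Y: "right_homogeneous_space G Y act"
    and "y0 \<in> Y" "g \<in> G"
  shows "{h ** g | h. h \<in> stabilizer G act y0} = {x \<in> G. act y0 x = act y0 g}"
proof (intro set_eqI iffI)
  note act = right_homogeneous_spaceD[OF Y \<open>y0 \<in> Y\<close>]
  note sub = matrix_subgroupD[OF G]
  {
    fix x assume "x \<in> {h ** g | h. h \<in> stabilizer G act y0}"
    then obtain h where "h \<in> G" "act y0 h = y0" "x = h ** g"
      unfolding stabilizer_def by auto
    then show "x \<in> {x \<in> G. act y0 x = act y0 g}"
      using act(2) sub(3) \<open>g \<in> G\<close> by force
  next
    fix x assume "x \<in> {x \<in> G. act y0 x = act y0 g}"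
    then have "x \<in> G" and x: "act y0 x = act y0 g" by auto
    define h where "h = x ** matrix_inv g"
    have "h \<in> G" unfolding h_def using \<open>x \<in> G\<close> \<open>g \<in> G\<close> sub by blast
    have "act y0 h = act (act y0 g) (matrix_inv g)"
      unfolding h_def using act(2) \<open>x \<in> G\<close> \<open>g \<in> G\<close> sub(4) x by metis
    also have "\<dots> = y0"
      using act(1,2) \<open>g \<in> G\<close> sub(4) matrix_inv_right[OF sub(2)[OF \<open>g \<in> G\<close>]] by metis
    finally have "h \<in> stabilizer G act y0" unfolding stabilizer_def using \<open>h \<in> G\<close> by simp
    moreover have "x = h ** g"
      unfolding h_def using sub(2)[OF \<open>g \<in> G\<close>] by (simp add: matrix_mul_inv_cancel_right)
    ultimately show "x \<in> {h ** g | h. h \<in> stabilizer G act y0}" by blast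
  }
qed

lemma twist_stabilizer_subset:
  fixes G :: "(complex^'n^'n) set"
  assumes G: "matrix_subgroup G" and Y: "right_homogeneous_space G Y act"
    and conj: "compatible_conj G \<tau> Y act cY" and "\<tau> ` G \<subseteq> G"
    and "y0 \<in> Y" "z \<in> G" and z: "act y0 z = cY y0"
  shows "twist \<tau> z ` stabilizer G act y0 \<subseteq> stabilizer G act y0"
proof
  note act = right_homogeneous_spaceD[OF Y \<open>y0 \<in> Y\<close>]
  note sub = matrix_subgroupD[OF G]
  fix x assume "x \<in> twist \<tau> z ` stabilizer G act y0"
  then obtain h where "h \<in> G" "act y0 h = y0" and x: "x = z ** \<tau> h ** matrix_inv z"
    unfolding stabilizer_def twist_def by auto
  have "\<tau> h \<in> G" "matrix_inv z \<in> G" using \<open>h \<in> G\<close> \<open>\<tau> ` G \<subseteq> G\<close> \<open>z \<in> G\<close> sub(4) by auto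
  then have "x \<in> G" unfolding x using \<open>z \<in> G\<close> sub(3) by blast
  have "act y0 x = act (act (act y0 z) (\<tau> h)) (matrix_inv z)"
    unfolding x using act(2) \<open>z \<in> G\<close> \<open>\<tau> h \<in> G\<close> \<open>matrix_inv z \<in> G\<close> sub(3) by simp
  also have "\<dots> = act (cY (act y0 h)) (matrix_inv z)"
    using conj \<open>y0 \<in> Y\<close> \<open>h \<in> G\<close> z unfolding compatible_conj_def by simp
  also have "\<dots> = act y0 (z ** matrix_inv z)"
    using \<open>act y0 h = y0\<close> z[symmetric] act(2) \<open>z \<in> G\<close> \<open>matrix_inv z \<in> G\<close> by simp
  also have "\<dots> = y0" using act(1) matrix_inv_right[OF sub(2)[OF \<open>z \<in> G\<close>]] by simp
  finally show "x \<in> stabilizer G act y0" unfolding stabilizer_def using \<open>x \<in> G\<close> by simp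
qed

theorem proposition3p2:
  fixes G :: "(complex^'n^'n) set" and \<tau> :: "complex^'n^'n \<Rightarrow> complex^'n^'n"
    and Y :: "'y set" and act :: "'y \<Rightarrow> complex^'n^'n \<Rightarrow> 'y" and cY :: "'y \<Rightarrow> 'y"
    and y0 :: 'y and gy0 z :: "complex^'n^'n" and H :: "(complex^'n^'n) set"
  assumes "real_group G \<tau>"
    and "right_homogeneous_space G Y act"
    and "compatible_conj G \<tau> Y act cY"
    and "y0 \<in> Y"
    and H_def: "H = stabilizer G act y0"
    and "gy0 \<in> G" and "cY y0 = act y0 gy0"
    and "z \<in> {h ** gy0 | h. h \<in> H}"
    and "z ** \<tau> z = mat 1"
  shows "anti_regular_involution G (twist \<tau> z)
    \<and> twist \<tau> z ` H = H
    \<and> (\<forall>h\<in>Z1 H (twist \<tau> z). h \<in> Z1 G (twist \<tau> z) \<and> h ** z \<in> Z1 G \<tau>)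
    \<and> (\<forall>h\<in>Z1 H (twist \<tau> z). \<forall>h'\<in>cls H (twist \<tau> z) h.
          cls G (twist \<tau> z) h' = cls G (twist \<tau> z) h \<and> cls G \<tau> (h' ** z) = cls G \<tau> (h ** z))
    \<and> ((\<exists>z'. z' \<in> {h ** gy0 | h. h \<in> H} \<inter> B1 G \<tau>) \<longleftrightarrow>
       cls G \<tau> (mat 1) \<in> (\<lambda>h. cls G \<tau> (h ** z)) ` Z1 H (twist \<tau> z))"
proof -
  have G: "matrix_subgroup G" and "anti_regular_involution G \<tau>"
    using assms(1) unfolding real_group_def linear_algebraic_group_def by auto
  then interpret \<tau>: matrix_group_involution G \<tau>
    using anti_regular_involution_iff by blast
  have fibre: "{h ** gy0 | h. h \<in> H} = {x \<in> G. act y0 x = cY y0}"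
    unfolding H_def assms(7) by (rule stabilizer_right_coset[OF G assms(2,4,6)])
  then have "z \<in> G" and z: "act y0 z = cY y0" using assms(8) by auto
  have "{h ** z | h. h \<in> H} = {x \<in> G. act y0 x = cY y0}"
    unfolding H_def z[symmetric] by (rule stabilizer_right_coset[OF G assms(2,4) \<open>z \<in> G\<close>])
  then have coset: "{h ** gy0 | h. h \<in> H} = {h ** z | h. h \<in> H}" using fibre by simp
  have "(\<exists>z'. z' \<in> {h ** gy0 | h. h \<in> H} \<inter> B1 G \<tau>) \<longleftrightarrow> (\<exists>h\<in>H. h ** z \<in> B1 G \<tau>)"
    unfolding coset by blast
  moreover have "H \<subseteq> G" unfolding H_def stabilizer_def by auto
  moreover have "twist \<tau> z ` H = H"
  proof (rule matrix_group_involution.involution_image_eq)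
    show "matrix_group_involution G (twist \<tau> z)"
      by (rule \<tau>.twist_group_involution[OF \<open>z \<in> G\<close> assms(9)])
    show "twist \<tau> z ` H \<subseteq> H"
      unfolding H_def using twist_stabilizer_subset[OF G assms(2,3) _ assms(4) \<open>z \<in> G\<close> z]
        \<tau>.map_closed by blast
  qed fact
  ultimately show ?thesis
    using anti_regular_involution_twist[OF G \<open>anti_regular_involution G \<tau>\<close> \<open>z \<in> G\<close> assms(9)]
      \<tau>.Z1_twist_subset_mult_right[OF \<open>z \<in> G\<close> assms(9)]
      \<tau>.cls_twist_subset_mult_right[OF \<open>z \<in> G\<close> assms(9)]
      \<tau>.right_coset_meets_B1_iff[OF \<open>z \<in> G\<close> assms(9)] by simp
qed

end
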